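(* Let $b>0$, $m\in(0,1]$, let $h:J\to[0,\infty)$ with $(0,1)\subseteq J\subseteq\mathbb{R}$, $h\not\equiv0$, and $h^2$ Lebesgue integrable on $(0,1)$. Let $\varphi:[0,b]\to[0,b]$ and let $f:[0,b]\to\mathbb{R}$ be a Lebesgue measurable $\varphi_{h,m}$-convex function. Then for all $x,y\in[0,b]$ with $\varphi(x)\ne m\varphi(y)$, $$\frac{1}{m\varphi(y)-\varphi(x)}\int_{\varphi(x)}^{m\varphi(y)}f(u)\,f\big(\varphi(x)+m\varphi(y)-u\big)\,du\le\big[f^2(\varphi(x))+m^2f^2(\varphi(y))\big]\int_0^1h(t)h(1-t)\,dt+(m+1)\,f(\varphi(x))f(\varphi(y))\int_0^1h^2(t)\,dt.$$
   Context: Definition ($\varphi_{h,m}$-convexity). Let $b>0$, $m\in(0,1]$, $h:J\to[0,\infty)$ with $(0,1)\subseteq J$, $h\not\equiv 0$, and $\varphi:[0,b]\to[0,b]$. A function $f:[0,b]\to\mathbb{R}$ is called $\varphi_{h,m}$-convex if $f\ge 0$ and $f(t\varphi(x)+m(1-t)\varphi(y))\le h(t)f(\varphi(x))+m\,h(1-t)f(\varphi(y))$ for all $x,y\in[0,b]$, $t\in(0,1)$. Integrals over an interval with endpoints in reversed order are oriented, so the left-hand side is the average of a non-negative function over the interval between $\varphi(x)$ and $m\varphi(y)$ (a value in $[0,\infty]$). *)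

theory Defs
  imports "HOL-Analysis.Analysis"
begin

text \<open>phi_{h,m}-convexity of f on [0,b] (f and phi are total functions; only values on
  [0,b] matter).\<close>
definition phi_hm_convex ::
  "real \<Rightarrow> real \<Rightarrow> (real \<Rightarrow> real) \<Rightarrow> (real \<Rightarrow> real) \<Rightarrow> (real \<Rightarrow> real) \<Rightarrow> bool" where
  "phi_hm_convex b m h \<phi> f \<longleftrightarrow>
     (\<forall>x\<in>{0..b}. 0 \<le> f x) \<and>
     (\<forall>x\<in>{0..b}. \<forall>y\<in>{0..b}. \<forall>t\<in>{0<..<1}.
        f (t * \<phi> x + m * (1 - t) * \<phi> y) \<le> h t * f (\<phi> x) + m * h (1 - t) * f (\<phi> y))"

end

theory Submission
  imports Defs
begin

text \<open>
  Write \<open>a = \<phi> x\<close>, \<open>c = m \<phi> y\<close>, \<open>A = f a\<close>, \<open>B = f (\<phi> y)\<close>.  A point \<open>u\<close> strictly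
  between \<open>a\<close> and \<open>c\<close> is \<open>u = c + t (a - c)\<close> with \<open>t \<in> (0,1)\<close>, and then \<open>a + c - u\<close>
  corresponds to \<open>1 - t\<close>.  Applying convexity at \<open>t\<close> and at \<open>1 - t\<close> bounds
  \<open>f u f (a + c - u)\<close> by \<open>(h t A + m h(1-t) B) (h(1-t) A + m h t B)\<close>.  The affine
  substitution \<open>u \<mapsto> t\<close> turns the integral over the segment into \<open>|a - c|\<close> times an
  integral over \<open>(0,1)\<close>.  Expanding the product and using the reflection \<open>t \<mapsto> 1 - t\<close>
  gives \<open>(A\<^sup>2 + m\<^sup>2 B\<^sup>2) \<integral> h(t) h(1-t) + 2 m A B \<integral> h\<^sup>2\<close>, and \<open>2 m \<le> m + 1\<close>.

  Since \<open>h\<close> itself is not assumed measurable, we work with the truncation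
  \<open>cutoff h = |h|\<close> on \<open>(0,1)\<close> and \<open>0\<close> elsewhere, which is measurable because
  \<open>h\<^sup>2\<close> is integrable on \<open>(0,1)\<close>.
\<close>

definition cutoff :: "(real \<Rightarrow> real) \<Rightarrow> real \<Rightarrow> real" where
  "cutoff h t = sqrt (indicator {0<..<1} t * (h t)\<^sup>2)"

lemma cutoff_nonneg: "0 \<le> cutoff h t"
  by (simp add: cutoff_def)

lemma cutoff_inside: "t \<in> {0<..<1} \<Longrightarrow> cutoff h t = \<bar>h t\<bar>"
  by (simp add: cutoff_def)

lemma cutoff_outside: "t \<notin> {0<..<1} \<Longrightarrow> cutoff h t = 0"
  by (simp add: cutoff_def)

lemma cutoff_square: "(cutoff h t)\<^sup>2 = indicator {0<..<1} t * (h t)\<^sup>2"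
  by (simp add: cutoff_def)

lemma cutoff_square_integrable:
  assumes "set_integrable lborel {0<..<1} (\<lambda>t. (h t)\<^sup>2)"
  shows "integrable lborel (\<lambda>t. (cutoff h t)\<^sup>2)"
    and "(\<integral>t. (cutoff h t)\<^sup>2 \<partial>lborel) = (LBINT t:{0<..<1}. (h t)\<^sup>2)"
  using assms by (simp_all add: cutoff_square set_integrable_def set_lebesgue_integral_def)

lemma cutoff_measurable:
  assumes "set_integrable lborel {0<..<1} (\<lambda>t. (h t)\<^sup>2)"
  shows "cutoff h \<in> borel_measurable borel"
proof -
  have "(\<lambda>t. indicator {0<..<1} t * (h t)\<^sup>2) \<in> borel_measurable borel"
    using assms unfolding set_integrable_def by (simp add: borel_measurable_integrable)
  then show ?thesis
    unfolding cutoff_def[abs_def] by measurable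
qed

lemma cutoff_reflected_product_integral:
  assumes "\<And>t. t \<in> {0<..<1} \<Longrightarrow> 0 \<le> h t"
  shows "(\<integral>t. cutoff h t * cutoff h (1 - t) \<partial>lborel) = (LBINT t:{0<..<1}. h t * h (1 - t))"
  unfolding set_lebesgue_integral_def
proof (rule Bochner_Integration.integral_cong[OF refl])
  fix t :: real
  show "cutoff h t * cutoff h (1 - t) = indicator {0<..<1} t *\<^sub>R (h t * h (1 - t))"
    using assms[of t] assms[of "1 - t"]
    by (cases "t \<in> {0<..<1}") (auto simp: cutoff_inside cutoff_outside)
qed

lemma reflect_integrable:
  fixes q :: "real \<Rightarrow> real"
  shows "integrable lborel q \<Longrightarrow> integrable lborel (\<lambda>t. q (1 - t))"
  using lborel_integrable_real_affine[of q "-1" 1] by simp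

lemma reflect_integral:
  fixes q :: "real \<Rightarrow> real"
  shows "(\<integral>t. q (1 - t) \<partial>lborel) = (\<integral>t. q t \<partial>lborel)"
  using lborel_integral_real_affine[of "-1" q 1] by simp

text \<open>If \<open>g\<^sup>2\<close> is integrable then so is \<open>g(t) g(1-t)\<close>, dominated by
  \<open>(g(t)\<^sup>2 + g(1-t)\<^sup>2) / 2\<close>.\<close>
lemma reflected_product_integrable:
  fixes g :: "real \<Rightarrow> real"
  assumes g_meas: "g \<in> borel_measurable borel"
    and g_sq: "integrable lborel (\<lambda>t. (g t)\<^sup>2)"
  shows "integrable lborel (\<lambda>t. g t * g (1 - t))"
proof (rule Bochner_Integration.integrable_bound)
  show "integrable lborel (\<lambda>t. ((g t)\<^sup>2 + (g (1 - t))\<^sup>2) / 2)"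
    using g_sq reflect_integrable[OF g_sq] by simp
  show "(\<lambda>t. g t * g (1 - t)) \<in> borel_measurable lborel"
    using g_meas by measurable
  have "norm (g t * g (1 - t)) \<le> norm (((g t)\<^sup>2 + (g (1 - t))\<^sup>2) / 2)" for t
  proof -
    have "0 \<le> (\<bar>g t\<bar> - \<bar>g (1 - t)\<bar>)\<^sup>2" by simp
    then show ?thesis
      by (simp add: abs_mult power2_eq_square algebra_simps)
  qed
  then show "AE t in lborel. norm (g t * g (1 - t)) \<le> norm (((g t)\<^sup>2 + (g (1 - t))\<^sup>2) / 2)"
    by simp
qed

text \<open>The bound produced by convexity at \<open>t\<close> and \<open>1 - t\<close>, with weight function \<open>g\<close>.\<close>
definition product_bound ::
  "(real \<Rightarrow> real) \<Rightarrow> real \<Rightarrow> real \<Rightarrow> real \<Rightarrow> real \<Rightarrow> real" where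
  "product_bound g m A B t = (g t * A + m * g (1 - t) * B) * (g (1 - t) * A + m * g t * B)"

text \<open>Expanding the product bound and symmetrising with \<open>t \<mapsto> 1 - t\<close>: both mixed
  terms \<open>g(t)\<^sup>2\<close> and \<open>g(1-t)\<^sup>2\<close> contribute \<open>m A B \<integral> g\<^sup>2\<close>.\<close>
lemma product_bound_integral:
  fixes g :: "real \<Rightarrow> real"
  assumes g_meas: "g \<in> borel_measurable borel"
    and g_sq: "integrable lborel (\<lambda>t. (g t)\<^sup>2)"
  shows "integrable lborel (product_bound g m A B)"
    and "(\<integral>t. product_bound g m A B t \<partial>lborel)
           = (A\<^sup>2 + m\<^sup>2 * B\<^sup>2) * (\<integral>t. g t * g (1 - t) \<partial>lborel)
             + 2 * m * A * B * (\<integral>t. (g t)\<^sup>2 \<partial>lborel)"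
proof -
  have expand: "product_bound g m A B = (\<lambda>t. (A\<^sup>2 + m\<^sup>2 * B\<^sup>2) * (g t * g (1 - t))
      + (m * A * B) * (g t)\<^sup>2 + (m * A * B) * (g (1 - t))\<^sup>2)"
    by (rule ext) (simp add: product_bound_def power2_eq_square algebra_simps)
  have prod: "integrable lborel (\<lambda>t. g t * g (1 - t))"
    by (rule reflected_product_integrable[OF g_meas g_sq])
  have refl: "integrable lborel (\<lambda>t. (g (1 - t))\<^sup>2)"
    using reflect_integrable[OF g_sq] .
  show "integrable lborel (product_bound g m A B)"
    unfolding expand using prod g_sq refl by simp
  show "(\<integral>t. product_bound g m A B t \<partial>lborel)
           = (A\<^sup>2 + m\<^sup>2 * B\<^sup>2) * (\<integral>t. g t * g (1 - t) \<partial>lborel)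
             + 2 * m * A * B * (\<integral>t. (g t)\<^sup>2 \<partial>lborel)"
    unfolding expand using prod g_sq refl reflect_integral[of "\<lambda>t. (g t)\<^sup>2"]
    by simp
qed

lemma product_bound_nonneg:
  "(\<And>t. 0 \<le> g t) \<Longrightarrow> 0 \<le> m \<Longrightarrow> 0 \<le> A \<Longrightarrow> 0 \<le> B \<Longrightarrow> 0 \<le> product_bound g m A B t"
  by (simp add: product_bound_def)

text \<open>Both arguments of \<open>f\<close> lie in \<open>[0,b]\<close>, where \<open>f \<ge> 0\<close>.\<close>
lemma phi_hm_convex_product_bound:
  assumes conv: "phi_hm_convex b m h \<phi> f" and m: "0 \<le> m" "m \<le> 1"
    and phi: "\<phi> ` {0..b} \<subseteq> {0..b}" and x: "x \<in> {0..b}" and y: "y \<in> {0..b}"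
    and t: "t \<in> {0<..<1}"
  shows "f (t * \<phi> x + m * (1 - t) * \<phi> y) * f ((1 - t) * \<phi> x + m * t * \<phi> y)
         \<le> (h t * f (\<phi> x) + m * h (1 - t) * f (\<phi> y))
           * (h (1 - t) * f (\<phi> x) + m * h t * f (\<phi> y))"
proof (rule mult_mono)
  have f_nonneg: "\<And>z. z \<in> {0..b} \<Longrightarrow> 0 \<le> f z"
    and cv: "\<And>s. s \<in> {0<..<1} \<Longrightarrow>
               f (s * \<phi> x + m * (1 - s) * \<phi> y) \<le> h s * f (\<phi> x) + m * h (1 - s) * f (\<phi> y)"
    using conv x y unfolding phi_hm_convex_def by auto
  have px: "0 \<le> \<phi> x" "\<phi> x \<le> b" and py: "0 \<le> \<phi> y" "\<phi> y \<le> b"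
    using phi x y by (auto simp: image_subset_iff)
  have "0 \<le> m * \<phi> y" "m * \<phi> y \<le> \<phi> y"
    using m py by (auto simp: mult_left_le_one_le)
  then have in_range: "s * \<phi> x + m * (1 - s) * \<phi> y \<in> {0..b}" if "s \<in> {0<..<1}" for s
  proof -
    have "s * \<phi> x + (1 - s) * (m * \<phi> y) \<le> b"
      using that px py \<open>m * \<phi> y \<le> \<phi> y\<close> by (intro convex_bound_le) auto
    moreover have "0 \<le> s * \<phi> x + (1 - s) * (m * \<phi> y)"
      using that px \<open>0 \<le> m * \<phi> y\<close> by simp
    ultimately show ?thesis
      by (simp add: mult.left_commute)
  qed
  show "f (t * \<phi> x + m * (1 - t) * \<phi> y) \<le> h t * f (\<phi> x) + m * h (1 - t) * f (\<phi> y)"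
    using cv[OF t] .
  show "f ((1 - t) * \<phi> x + m * t * \<phi> y) \<le> h (1 - t) * f (\<phi> x) + m * h t * f (\<phi> y)"
    using cv[of "1 - t"] t by simp
  show "0 \<le> f ((1 - t) * \<phi> x + m * t * \<phi> y)"
    using f_nonneg in_range[of "1 - t"] t by simp
  show "0 \<le> h t * f (\<phi> x) + m * h (1 - t) * f (\<phi> y)"
    using f_nonneg in_range[OF t] cv[OF t] by (meson order_trans)
qed

text \<open>The endpoints form a null set.\<close>
lemma nn_integral_segment_le:
  fixes a c :: real and F G :: "real \<Rightarrow> ennreal"
  assumes ac: "a \<noteq> c" and G_meas: "G \<in> borel_measurable borel"
    and bound: "\<And>t. t \<in> {0<..<1} \<Longrightarrow> F (c + t * (a - c)) \<le> G t"
  shows "(\<integral>\<^sup>+ u \<in> {min a c..max a c}. F u \<partial>lebesgue) \<le> ennreal \<bar>a - c\<bar> * (\<integral>\<^sup>+ t. G t \<partial>lborel)"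
proof -
  have pointwise: "F u * indicator {min a c..max a c} u \<le> G ((u - c) / (a - c))"
    if u: "u \<notin> {a, c}" for u
  proof (cases "u \<in> {min a c..max a c}")
    case True
    define t where "t = (u - c) / (a - c)"
    have "t \<in> {0<..<1}"
      using True u ac unfolding t_def
      by (cases "a < c") (auto simp: field_simps min_def max_def)
    moreover have "u = c + t * (a - c)"
      using ac by (simp add: t_def)
    ultimately have "F u \<le> G t"
      using bound by metis
    then show ?thesis
      using True by (simp add: t_def)
  qed simp
  have "(\<integral>\<^sup>+ u \<in> {min a c..max a c}. F u \<partial>lebesgue) \<le> (\<integral>\<^sup>+ u. G ((u - c) / (a - c)) \<partial>lebesgue)"
    by (rule nn_integral_mono_AE, rule eventually_mono[OF AE_not_in[of "{a, c}"]])
       (use pointwise in auto)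
  also have "\<dots> = (\<integral>\<^sup>+ u. G ((u - c) / (a - c)) \<partial>lborel)"
    by (rule nn_integral_completion)
  also have "\<dots> = ennreal \<bar>a - c\<bar> * (\<integral>\<^sup>+ t. G ((c + (a - c) * t - c) / (a - c)) \<partial>lborel)"
    using ac G_meas by (intro nn_integral_real_affine) auto
  also have "(\<lambda>t. G ((c + (a - c) * t - c) / (a - c))) = G"
    using ac by simp
  finally show ?thesis .
qed

lemma phi_hm_convex_segment_integral:
  assumes conv: "phi_hm_convex b m h \<phi> f" and m: "0 \<le> m" "m \<le> 1"
    and h01: "\<And>t. t \<in> {0<..<1} \<Longrightarrow> 0 \<le> h t"
    and h2_int: "set_integrable lborel {0<..<1} (\<lambda>t. (h t)\<^sup>2)"
    and phi: "\<phi> ` {0..b} \<subseteq> {0..b}" and x: "x \<in> {0..b}" and y: "y \<in> {0..b}"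
    and ne: "\<phi> x \<noteq> m * \<phi> y"
  shows "(\<integral>\<^sup>+ u \<in> {min (\<phi> x) (m * \<phi> y) .. max (\<phi> x) (m * \<phi> y)}.
               ennreal (f u * f (\<phi> x + m * \<phi> y - u)) \<partial>lebesgue)
         \<le> ennreal \<bar>m * \<phi> y - \<phi> x\<bar>
            * ennreal (\<integral>t. product_bound (cutoff h) m (f (\<phi> x)) (f (\<phi> y)) t \<partial>lborel)"
proof -
  define P where "P = product_bound (cutoff h) m (f (\<phi> x)) (f (\<phi> y))"
  have P_int: "integrable lborel P"
    unfolding P_def
    by (rule product_bound_integral(1)[OF cutoff_measurable cutoff_square_integrable(1)])
       (use h2_int in auto)
  have f_nonneg: "0 \<le> f (\<phi> x)" "0 \<le> f (\<phi> y)"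
    using conv phi x y unfolding phi_hm_convex_def by (auto simp: image_subset_iff)
  have "ennreal (f u * f (\<phi> x + m * \<phi> y - u)) \<le> ennreal (P t)"
    if t: "t \<in> {0<..<1}" and u: "u = m * \<phi> y + t * (\<phi> x - m * \<phi> y)" for t u
  proof (rule ennreal_leI)
    have "u = t * \<phi> x + m * (1 - t) * \<phi> y" and "\<phi> x + m * \<phi> y - u = (1 - t) * \<phi> x + m * t * \<phi> y"
      using u by (simp_all add: algebra_simps)
    moreover have "cutoff h t = h t" "cutoff h (1 - t) = h (1 - t)"
      using t h01[of t] h01[of "1 - t"] by (simp_all add: cutoff_inside)
    ultimately show "f u * f (\<phi> x + m * \<phi> y - u) \<le> P t"
      using phi_hm_convex_product_bound[OF conv m phi x y t]
      by (simp add: P_def product_bound_def)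
  qed
  then have "(\<integral>\<^sup>+ u \<in> {min (\<phi> x) (m * \<phi> y) .. max (\<phi> x) (m * \<phi> y)}.
               ennreal (f u * f (\<phi> x + m * \<phi> y - u)) \<partial>lebesgue)
             \<le> ennreal \<bar>\<phi> x - m * \<phi> y\<bar> * (\<integral>\<^sup>+ t. ennreal (P t) \<partial>lborel)"
    using P_int by (intro nn_integral_segment_le[OF ne]) (auto simp: borel_measurable_integrable)
  also have "(\<integral>\<^sup>+ t. ennreal (P t) \<partial>lborel) = ennreal (\<integral>t. P t \<partial>lborel)"
    using P_int product_bound_nonneg[OF cutoff_nonneg m(1) f_nonneg]
    by (intro nn_integral_eq_integral) (auto simp: P_def)
  finally show ?thesis
    by (simp add: abs_minus_commute P_def)
qed

lemma ennreal_divide_estimate: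
  fixes d r s :: real and I :: ennreal
  assumes "0 < d" and "I \<le> ennreal d * ennreal r" and "r \<le> s"
  shows "ennreal (1 / d) * I \<le> ennreal s"
proof -
  have "ennreal (1 / d) * I \<le> ennreal (1 / d) * ennreal d * ennreal r"
    using mult_left_mono[OF assms(2)] by (simp add: mult.assoc)
  also have "ennreal (1 / d) * ennreal d = 1"
    using assms(1) by (simp add: ennreal_mult'[symmetric])
  finally show ?thesis
    using assms(3) by (simp add: ennreal_leI order_trans)
qed

theorem theorem2p1:
  fixes b m :: real and J :: "real set" and h \<phi> f :: "real \<Rightarrow> real"
  assumes b: "0 < b"
    and m: "0 < m" "m \<le> 1"
    and J: "{0<..<1} \<subseteq> J"
    and h_nonneg: "\<forall>t\<in>J. 0 \<le> h t"
    and h_nz: "\<exists>t\<in>J. h t \<noteq> 0"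
    and h2_int: "set_integrable lborel {0<..<1} (\<lambda>t. (h t)\<^sup>2)"
    and phi: "\<phi> ` {0..b} \<subseteq> {0..b}"
    and f_meas: "set_borel_measurable lebesgue {0..b} f"
    and conv: "phi_hm_convex b m h \<phi> f"
    and x: "x \<in> {0..b}" and y: "y \<in> {0..b}"
    and ne: "\<phi> x \<noteq> m * \<phi> y"
  shows "ennreal (1 / \<bar>m * \<phi> y - \<phi> x\<bar>) *
           (\<integral>\<^sup>+ u \<in> {min (\<phi> x) (m * \<phi> y) .. max (\<phi> x) (m * \<phi> y)}.
               ennreal (f u * f (\<phi> x + m * \<phi> y - u)) \<partial>lebesgue)
         \<le> ennreal (((f (\<phi> x))\<^sup>2 + m\<^sup>2 * (f (\<phi> y))\<^sup>2) * (LBINT t:{0<..<1}. h t * h (1 - t))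
                    + (m + 1) * f (\<phi> x) * f (\<phi> y) * (LBINT t:{0<..<1}. (h t)\<^sup>2))"
proof -
  define A B where "A = f (\<phi> x)" and "B = f (\<phi> y)"
  have h01: "\<And>t. t \<in> {0<..<1} \<Longrightarrow> 0 \<le> h t" using J h_nonneg by auto
  have AB: "0 \<le> A" "0 \<le> B"
    using conv phi x y unfolding phi_hm_convex_def A_def B_def by (auto simp: image_subset_iff)
  have bound_integral: "(\<integral>t. product_bound (cutoff h) m A B t \<partial>lborel)
      = (A\<^sup>2 + m\<^sup>2 * B\<^sup>2) * (LBINT t:{0<..<1}. h t * h (1 - t))
        + 2 * m * A * B * (LBINT t:{0<..<1}. (h t)\<^sup>2)"
    using product_bound_integral(2)[OF cutoff_measurable cutoff_square_integrable(1), of h m A B]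
      cutoff_square_integrable(2) cutoff_reflected_product_integral[OF h01] h2_int by simp
  have "2 * m * A * B * (LBINT t:{0<..<1}. (h t)\<^sup>2) \<le> (m + 1) * A * B * (LBINT t:{0<..<1}. (h t)\<^sup>2)"
    using m AB by (intro mult_right_mono) (auto simp: set_lebesgue_integral_def)
  then show ?thesis
    unfolding A_def[symmetric] B_def[symmetric]
    using phi_hm_convex_segment_integral[OF conv _ m(2) h01 h2_int phi x y ne, folded A_def B_def] m ne
    by (intro ennreal_divide_estimate) (auto simp: bound_integral)
qed

end
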